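(* Consider the Decaying-$\epsilon$-FOCuS procedure (described in the context) on $M>1$ streams with detection threshold $\lambda>0$, where stream 1 has a change-point at $\nu=0$ (so every observation of stream 1 is $\mathcal{N}(\mu_1,1)$ with $\mu_1\ne0$, and all other observations are $\mathcal{N}(0,1)$). For $t\ge0$ let $H_t=\{\max_{m\in[M]\setminus\{1\}}T_t^{(m)}\ge T_t^{(1)}\}$. Then $\sum_{t=0}^\infty \mathbb{P}_{M,0}(H_t)<\infty$.
   Context: Setting: there are $M$ independent data streams. At each time $t=1,2,\dots$ an agent selects one stream $A_t\in\{1,\dots,M\}$ and observes one value $X_t\in\mathbb{R}$ from it. The $i$-th observation taken from stream $m$ is denoted $X_i^{(m)}$. Pre-change observations are $\mathcal{N}(0,1)$. Stream 1 has a change-point $\nu$: if $A_t=1$ and $t>\nu$ then $X_t\sim\mathcal{N}(\mu_1,1)$ with $\mu_1\neq0$; otherwise $X_t\sim\mathcal{N}(0,1)$; observations are conditionally independent given the selections. $\mathbb{P}_{M,\nu}$ denotes probability for $M$ streams with change at $\nu$ in stream 1. $\mathcal{F}_t=\sigma(A_1,X_1,\dots,A_t,X_t)$. The sampling process and statistics are defined for all $t\ge 0$ (the sampling rule does not depend on the threshold). Decaying-$\epsilon$-FOCuS: let $N_t^{(m)}$ be the number of times stream $m$ was selected up to and including time $t$. The local GLR statistic is $T_t^{(m)}=\max_{0\le k<N_t^{(m)}}\frac{(\sum_{i=k+1}^{N_t^{(m)}}X_i^{(m)})^2}{2(N_t^{(m)}-k)}$ (and $T_t^{(m)}=0$ if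 $N_t^{(m)}=0$); $T_t=\max_m T_t^{(m)}$ and $M_t=\arg\max_m T_t^{(m)}$. The local change-point estimate $\hat\nu_t^{(m)}$ is the time at which stream $m$'s $\hat k$-th observation was taken, where $\hat k$ is the maximizing index $k$ in $T_t^{(m)}$ (time $0$ if $\hat k=0$ or $N_t^{(m)}=0$); the global estimate is $\hat\nu_t=\hat\nu_t^{(M_t)}$; ties are broken uniformly at random. Initially $\hat\nu_0=0$, $M_0$ uniform on $[M]$. At time $t$, set $\epsilon_t=\min\{1, M/\max(1,t-\hat\nu_{t-1})^{1/3}\}$, draw $G_t\sim\mathrm{Bernoulli}(\epsilon_t)$ (conditionally on $\mathcal{F}_{t-1}$); if $G_t=1$ choose $A_t$ uniformly from $[M]$, otherwise $A_t=M_{t-1}$; then observe $X_t$ and update the statistics. The procedure stops at $\tau=\inf\{t\ge 1: T_t\ge\lambda\}$. *)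

theory Defs
  imports "HOL-Probability.Probability"
begin

text \<open>Per-time randomness omega t = (z, ug, ua, um, uk):
  z ~ N(0,1) (observation noise at time t), ug ~ U[0,1] (Bernoulli(eps_t) draw: G_t = (ug < eps_t)),
  ua ~ U[0,1] (uniform stream choice at time t when exploring),
  um, uk ~ U[0,1] (uniform tie breaking for M_t and for the local change-point index at time t).\<close>

type_synonym sample = "real \<times> real \<times> real \<times> real \<times> real"

definition unif01 :: "real measure" where
  "unif01 = uniform_measure lborel {0..1}"

definition sample_measure :: "sample measure" where
  "sample_measure = density lborel (normal_density 0 1) \<Otimes>\<^sub>M
     (unif01 \<Otimes>\<^sub>M (unif01 \<Otimes>\<^sub>M (unif01 \<Otimes>\<^sub>M unif01)))"

definition FOCuS_space :: "(nat \<Rightarrow> sample) measure" where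
  "FOCuS_space = PiM UNIV (\<lambda>_. sample_measure)"

text \<open>Uniform choice of an element of a finite nonempty set of naturals via u ~ U[0,1].\<close>
definition pick :: "real \<Rightarrow> nat set \<Rightarrow> nat" where
  "pick u S = sorted_list_of_set S ! min (card S - 1) (nat \<lfloor>u * real (card S)\<rfloor>)"

definition unif_stream :: "nat \<Rightarrow> real \<Rightarrow> nat" where
  "unif_stream M u = Suc (min (M - 1) (nat \<lfloor>u * real M\<rfloor>))"

text \<open>A history h is the list of (A_t, X_t) for t = 1..length h (h ! (t-1) = (A_t, X_t)).
  obs h m lists (time, value) of the observations X_1^(m), X_2^(m), ... of stream m.\<close>
definition obs :: "(nat \<times> real) list \<Rightarrow> nat \<Rightarrow> (nat \<times> real) list" where
  "obs h m = map (\<lambda>i. (Suc i, snd (h ! i))) (filter (\<lambda>i. fst (h ! i) = m) [0..<length h])"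

definition glr :: "(nat \<times> real) list \<Rightarrow> nat \<Rightarrow> nat \<Rightarrow> real" where
  "glr h m k = (let xs = map snd (obs h m); n = length xs
                in (\<Sum>i\<in>{k..<n}. xs ! i)\<^sup>2 / (2 * real (n - k)))"

definition Tstat :: "(nat \<times> real) list \<Rightarrow> nat \<Rightarrow> real" where
  "Tstat h m = (if obs h m = [] then 0 else Max (glr h m ` {..<length (obs h m)}))"

definition nuhat_loc :: "real \<Rightarrow> (nat \<times> real) list \<Rightarrow> nat \<Rightarrow> nat" where
  "nuhat_loc uk h m = (if obs h m = [] then 0 else
     (let k = pick uk {k. k < length (obs h m) \<and> glr h m k = Tstat h m}
      in if k = 0 then 0 else fst (obs h m ! (k - 1))))"

definition Tglob :: "nat \<Rightarrow> (nat \<times> real) list \<Rightarrow> real" where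
  "Tglob M h = Max (Tstat h ` {1..M})"

definition Mhat :: "nat \<Rightarrow> real \<Rightarrow> (nat \<times> real) list \<Rightarrow> nat" where
  "Mhat M um h = pick um {m \<in> {1..M}. Tstat h m = Tglob M h}"

definition nuhat :: "nat \<Rightarrow> real \<Rightarrow> real \<Rightarrow> (nat \<times> real) list \<Rightarrow> nat" where
  "nuhat M um uk h = nuhat_loc uk h (Mhat M um h)"

fun hist :: "nat \<Rightarrow> real \<Rightarrow> nat \<Rightarrow> (nat \<Rightarrow> sample) \<Rightarrow> nat \<Rightarrow> (nat \<times> real) list" where
  "hist M mu nu \<omega> 0 = []"
| "hist M mu nu \<omega> (Suc t) =
     (let h = hist M mu nu \<omega> t;
          (_, _, _, um, uk) = \<omega> t;
          Mprev = Mhat M um h;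
          nuprev = nuhat M um uk h;
          n = Suc t;
          eps = min 1 (real M / (max 1 (real n - real nuprev)) powr (1/3));
          (z, ug, ua, _, _) = \<omega> n;
          A = (if ug < eps then unif_stream M ua else Mprev);
          X = z + (if A = 1 \<and> nu < n then mu else 0)
      in h @ [(A, X)])"

end

theory Submission
  imports Defs "HOL-Real_Asymp.Real_Asymp"
begin

(*
  Let q = M t^(-1/3). Up to time t every step explores with probability at least q, so at each
  step stream 1 is sampled by forced exploration independently with probability at least q/M;
  by a Chernoff bound, fewer than l = t^(2/3)/4 such samples occur only with probability
  exp(-Omega(t^(2/3))). If stream 1 has N >= l observations and still some other stream's
  statistic reaches T^(1), then either the noise sum of stream 1 deviates by |mu| N/2 from 0,
  or T^(1) >= mu^2 N/8 and a window of some pure-noise stream has GLR >= mu^2 l/8. Either way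
  one of polynomially many exponential martingales exp(theta S - theta^2 L/2), theta from a
  finite grid, exceeds exp(mu^2 l/8). Each has mean at most 1 however the streams are chosen,
  so P(H_t) <= poly(t) exp(-c t^(2/3)) = O(t^(-2)), which is summable.

  Measurability of the events involved is never established: all bounds use lower
  nonnegative integrals, which are dominated by iterated integrals along the sample path.
*)

section \<open>Lower integrals\<close>

lemma nn_integral_le_of_measurable_minorants:
  assumes "\<And>g. g \<in> borel_measurable M \<Longrightarrow> g \<le> f \<Longrightarrow> integral\<^sup>N M g \<le> B"
  shows "integral\<^sup>N M f \<le> B"
  unfolding nn_integral_def
proof (rule SUP_least)
  fix g assume g: "g \<in> {g. simple_function M g \<and> g \<le> f}"
  then have "integral\<^sup>S M g = integral\<^sup>N M g"
    by (simp add: nn_integral_eq_simple_integral)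
  also have "\<dots> \<le> B"
    using g by (intro assms) (auto intro: borel_measurable_simple_function)
  finally show "integral\<^sup>S M g \<le> B" .
qed

lemma (in pair_sigma_finite) nn_integral_le_iterated:
  "integral\<^sup>N (M1 \<Otimes>\<^sub>M M2) f \<le> (\<integral>\<^sup>+ x. \<integral>\<^sup>+ y. f (x, y) \<partial>M2 \<partial>M1)"
proof (rule nn_integral_le_of_measurable_minorants)
  fix g assume "g \<in> borel_measurable (M1 \<Otimes>\<^sub>M M2)" "g \<le> f"
  then show "integral\<^sup>N (M1 \<Otimes>\<^sub>M M2) g \<le> (\<integral>\<^sup>+ x. \<integral>\<^sup>+ y. f (x, y) \<partial>M2 \<partial>M1)"
    by (simp add: M2.nn_integral_fst[symmetric] nn_integral_mono le_fun_def)
qed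

lemma (in pair_sigma_finite) nn_integral_le_iterated_swap:
  "integral\<^sup>N (M1 \<Otimes>\<^sub>M M2) f \<le> (\<integral>\<^sup>+ y. \<integral>\<^sup>+ x. f (x, y) \<partial>M1 \<partial>M2)"
proof (rule nn_integral_le_of_measurable_minorants)
  fix g assume "g \<in> borel_measurable (M1 \<Otimes>\<^sub>M M2)" "g \<le> f"
  then show "integral\<^sup>N (M1 \<Otimes>\<^sub>M M2) g \<le> (\<integral>\<^sup>+ y. \<integral>\<^sup>+ x. f (x, y) \<partial>M1 \<partial>M2)"
    by (simp add: nn_integral_snd[symmetric] nn_integral_mono le_fun_def)
qed

lemma nn_integral_distr_le:
  assumes "T \<in> measurable M N"
  shows "integral\<^sup>N (distr M N T) f \<le> (\<integral>\<^sup>+ x. f (T x) \<partial>M)"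
proof (rule nn_integral_le_of_measurable_minorants)
  fix g assume "g \<in> borel_measurable (distr M N T)" "g \<le> f"
  then show "integral\<^sup>N (distr M N T) g \<le> (\<integral>\<^sup>+ x. f (T x) \<partial>M)"
    using assms by (simp add: nn_integral_distr nn_integral_mono le_fun_def)
qed

section \<open>Iterated integrals on sequence spaces\<close>

fun iter_nn_integral :: "'a measure \<Rightarrow> nat \<Rightarrow> ((nat \<Rightarrow> 'a) \<Rightarrow> ennreal) \<Rightarrow> ennreal" where
  "iter_nn_integral M 0 f = f (\<lambda>_. undefined)"
| "iter_nn_integral M (Suc k) f = iter_nn_integral M k (\<lambda>w. \<integral>\<^sup>+ s. f (w(k := s)) \<partial>M)"

definition prefix_determined :: "nat \<Rightarrow> ((nat \<Rightarrow> 'a) \<Rightarrow> 'b) \<Rightarrow> bool" where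
  "prefix_determined k f \<longleftrightarrow> (\<forall>w w'. (\<forall>i<k. w i = w' i) \<longrightarrow> f w = f w')"

lemma prefix_determined_comp: "prefix_determined k f \<Longrightarrow> prefix_determined k (\<lambda>w. g (f w))"
  unfolding prefix_determined_def by metis

lemma prefix_determined_sum:
  "(\<And>j. j \<in> J \<Longrightarrow> prefix_determined k (f j)) \<Longrightarrow> prefix_determined k (\<lambda>w. \<Sum>j\<in>J. f j w)"
  unfolding prefix_determined_def by (metis (no_types, lifting) sum.cong)

lemma iter_nn_integral_mono:
  "(\<And>w. f w \<le> g w) \<Longrightarrow> iter_nn_integral M k f \<le> iter_nn_integral M k g"
proof (induction k arbitrary: f g)
  case (Suc k)
  then show ?case by (simp add: nn_integral_mono)
qed simp

lemma (in prob_space) iter_nn_integral_const: "iter_nn_integral M k (\<lambda>_. c) = c"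
  by (induction k arbitrary: c) (simp_all add: emeasure_space_1)

context sequence_space
begin

lemma nn_integral_le_case_nat:
  "integral\<^sup>N S f \<le> (\<integral>\<^sup>+ s. \<integral>\<^sup>+ w. f (case_nat s w) \<partial>S \<partial>M)"
proof -
  interpret pair_sigma_finite M S
    by (simp add: pair_sigma_finite_def prob_space_imp_sigma_finite M.prob_space_axioms
        prob_space_axioms)
  have "(\<lambda>(s, w). case_nat s w) \<in> measurable (M \<Otimes>\<^sub>M S) S"
    by (simp add: split_beta' measurable_case_nat')
  then have "integral\<^sup>N S f \<le> (\<integral>\<^sup>+ x. f (case_prod case_nat x) \<partial>(M \<Otimes>\<^sub>M S))"
    using nn_integral_distr_le by (subst (1) PiM_iter[symmetric]) blast
  also have "\<dots> \<le> (\<integral>\<^sup>+ s. \<integral>\<^sup>+ w. f (case_nat s w) \<partial>S \<partial>M)"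
    using nn_integral_le_iterated[of "\<lambda>x. f (case_prod case_nat x)"] by simp
  finally show ?thesis .
qed

lemma nn_integral_le_iter_nn_integral_comb_seq:
  "integral\<^sup>N S f \<le> iter_nn_integral M k (\<lambda>w. \<integral>\<^sup>+ w'. f (comb_seq k w w') \<partial>S)"
proof (induction k)
  case 0
  then show ?case by (simp add: comb_seq_0)
next
  case (Suc k)
  have comb_seq_upd: "comb_seq (Suc k) (w(k := s)) w' = comb_seq k w (case_nat s w')"
    for w w' :: "nat \<Rightarrow> 'a" and s
    by (rule ext) (simp add: comb_seq_Suc comb_seq_def)
  have "iter_nn_integral M k (\<lambda>w. \<integral>\<^sup>+ w'. f (comb_seq k w w') \<partial>S)
      \<le> iter_nn_integral M (Suc k) (\<lambda>w. \<integral>\<^sup>+ w'. f (comb_seq (Suc k) w w') \<partial>S)"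
    unfolding iter_nn_integral.simps comb_seq_upd
    by (intro iter_nn_integral_mono nn_integral_le_case_nat)
  with Suc show ?case by simp
qed

lemma nn_integral_le_iter_nn_integral:
  assumes "prefix_determined k f"
  shows "integral\<^sup>N S f \<le> iter_nn_integral M k f"
proof -
  have "\<And>w w'. f (comb_seq k w w') = f w"
    using assms by (auto simp: prefix_determined_def comb_seq_less)
  then show ?thesis
    using nn_integral_le_iter_nn_integral_comb_seq[of f k] by (simp add: emeasure_space_1)
qed

lemma measure_le_of_iter_nn_integral:
  assumes "\<And>w. w \<in> A \<Longrightarrow> 1 \<le> g w" and "prefix_determined k g"
    and "iter_nn_integral M k g \<le> ennreal b" and "0 \<le> b"
  shows "measure S A \<le> b"
proof (cases "A \<in> sets S")
  case True
  have "emeasure S A = (\<integral>\<^sup>+ w. indicator A w \<partial>S)"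
    using True by simp
  also have "\<dots> \<le> integral\<^sup>N S g"
    using assms(1) by (intro nn_integral_mono) (simp add: indicator_def)
  also have "\<dots> \<le> ennreal b"
    using nn_integral_le_iter_nn_integral[OF assms(2)] assms(3) by (rule order_trans)
  finally show ?thesis
    using assms(4) by (simp add: measure_def enn2real_leI)
qed (simp add: measure_notin_sets assms(4))

end

section \<open>Gaussian tilting\<close>

lemma prob_space_std_normal: "prob_space std_normal_distribution"
  by (rule prob_space_normal_density) simp

lemma normal_density_tilt:
  "normal_density 0 1 z * exp (\<theta> * z - \<theta>\<^sup>2 / 2) = normal_density \<theta> 1 z"
proof -
  have "- (z - 0)\<^sup>2 / (2 * 1\<^sup>2) + (\<theta> * z - \<theta>\<^sup>2 / 2) = - (z - \<theta>)\<^sup>2 / (2 * 1\<^sup>2)"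
    by (simp add: power2_eq_square field_simps)
  then show ?thesis
    unfolding normal_density_def by (simp add: exp_add[symmetric] mult.assoc)
qed

lemma nn_integral_std_normal_exp_tilt:
  "(\<integral>\<^sup>+ z. ennreal (exp (\<theta> * z - \<theta>\<^sup>2 / 2)) \<partial>std_normal_distribution) = 1"
proof -
  have "(\<integral>\<^sup>+ z. ennreal (exp (\<theta> * z - \<theta>\<^sup>2 / 2)) \<partial>std_normal_distribution)
      = (\<integral>\<^sup>+ z. ennreal (normal_density \<theta> 1 z) \<partial>lborel)"
    by (simp add: nn_integral_density ennreal_mult'[symmetric] normal_density_tilt)
  also have "\<dots> = 1"
    by (subst nn_integral_eq_integral) auto
  finally show ?thesis .
qed

text \<open>The switches \<open>b j\<close> need not be measurable: they are frozen while the Gaussian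
  coordinate is integrated out first.\<close>
lemma nn_integral_std_normal_tilt_sum_le:
  assumes "prob_space R" and "finite J"
  shows "(\<integral>\<^sup>+ s. (\<Sum>j\<in>J. c j * ennreal (exp (if b j (snd s)
            then \<theta> j * fst s - (\<theta> j)\<^sup>2 / 2 else 0))) \<partial>(std_normal_distribution \<Otimes>\<^sub>M R))
    \<le> (\<Sum>j\<in>J. c j)"
proof -
  let ?N = "std_normal_distribution"
  interpret R: prob_space R by fact
  interpret pair_sigma_finite ?N R
    by (simp add: pair_sigma_finite_def prob_space_imp_sigma_finite prob_space_std_normal
        R.prob_space_axioms)
  have tilt: "(\<integral>\<^sup>+ z. c j * ennreal (exp (if b j r then \<theta> j * z - (\<theta> j)\<^sup>2 / 2 else 0)) \<partial>?N) = c j"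
    for j r
    using nn_integral_std_normal_exp_tilt[of "\<theta> j"] prob_space.emeasure_space_1[OF prob_space_std_normal]
    by (cases "b j r") (simp_all add: nn_integral_cmult)
  have "(\<integral>\<^sup>+ s. (\<Sum>j\<in>J. c j * ennreal (exp (if b j (snd s)
            then \<theta> j * fst s - (\<theta> j)\<^sup>2 / 2 else 0))) \<partial>(?N \<Otimes>\<^sub>M R))
      \<le> (\<integral>\<^sup>+ r. \<integral>\<^sup>+ z. (\<Sum>j\<in>J. c j * ennreal (exp (if b j r
            then \<theta> j * z - (\<theta> j)\<^sup>2 / 2 else 0))) \<partial>?N \<partial>R)"
    using nn_integral_le_iterated_swap[of "\<lambda>s. \<Sum>j\<in>J. c j * ennreal (exp (if b j (snd s)
            then \<theta> j * fst s - (\<theta> j)\<^sup>2 / 2 else 0))"]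
    by (simp cong: if_cong)
  also have "\<dots> = (\<integral>\<^sup>+ r. (\<Sum>j\<in>J. c j) \<partial>R)"
    by (simp add: nn_integral_sum tilt)
  also have "\<dots> = (\<Sum>j\<in>J. c j)"
    by (simp add: R.emeasure_space_1)
  finally show ?thesis .
qed

section \<open>The sampling model\<close>

lemma prob_space_unif01: "prob_space unif01"
  unfolding unif01_def by (rule prob_space_uniform_measure) simp_all

lemma prob_space_unif01_pow4: "prob_space (unif01 \<Otimes>\<^sub>M (unif01 \<Otimes>\<^sub>M (unif01 \<Otimes>\<^sub>M unif01)))"
  by (intro prob_space_pair prob_space_unif01)

lemma prob_space_sample_measure: "prob_space sample_measure"
  unfolding sample_measure_def by (intro prob_space_pair prob_space_std_normal prob_space_unif01_pow4)

interpretation Seq: sequence_space sample_measure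
  by (simp add: sequence_space_def product_prob_space_def product_prob_space_axioms_def
      product_sigma_finite_def prob_space_sample_measure prob_space_imp_sigma_finite)

lemma (in prob_space) nn_integral_half_on_event:
  assumes "{x \<in> space M. P x} \<in> events"
  shows "(\<integral>\<^sup>+ x. ennreal (if P x then 1/2 else 1) \<partial>M) = ennreal (1 - prob {x \<in> space M. P x} / 2)"
proof -
  let ?E = "{x \<in> space M. P x}"
  have eq: "(if P x then 1/2 else 1) = 1 - indicator ?E x / (2::real)" if "x \<in> space M" for x
    using that by (simp add: indicator_def)
  have "(\<integral>\<^sup>+ x. ennreal (if P x then 1/2 else 1) \<partial>M) = (\<integral>\<^sup>+ x. ennreal (1 - indicator ?E x / 2) \<partial>M)"
    by (rule nn_integral_cong) (simp add: eq)
  also have "\<dots> = ennreal (expectation (\<lambda>x. 1 - indicator ?E x / 2))"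
  proof (rule nn_integral_eq_integral)
    show "integrable M (\<lambda>x. 1 - indicator ?E x / (2::real))"
      using assms by (simp add: emeasure_eq_measure)
  qed (simp add: indicator_def)
  also have "expectation (\<lambda>x. 1 - indicator ?E x / 2) = 1 - prob ?E / 2"
    using assms by (subst Bochner_Integration.integral_diff) (auto simp: emeasure_eq_measure prob_space)
  finally show ?thesis .
qed

lemma emeasure_unif01_lessThan: "0 \<le> q \<Longrightarrow> q \<le> 1 \<Longrightarrow> emeasure unif01 {..<q} = ennreal q"
proof -
  assume q: "0 \<le> q" "q \<le> 1"
  have "{0..1} \<inter> {..<q} = {0..<q}" using q by auto
  then show ?thesis unfolding unif01_def using q by (simp add: divide_ennreal_def)
qed

text \<open>At a step whose exploration probability is at least \<open>q\<close>, a sample with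
  \<open>explores_first q M\<close> makes the procedure explore and pick stream 1.\<close>
definition explores_first :: "real \<Rightarrow> nat \<Rightarrow> real \<times> real \<times> real \<times> real \<Rightarrow> bool" where
  "explores_first q M r \<longleftrightarrow> fst r < q \<and> fst (snd r) < 1 / real M"

lemma
  assumes "0 \<le> q" "q \<le> 1" "M \<ge> 1"
  shows explores_first_sets: "{s \<in> space sample_measure. explores_first q M (snd s)} \<in> sets sample_measure"
    and emeasure_explores_first:
      "emeasure sample_measure {s \<in> space sample_measure. explores_first q M (snd s)} = ennreal (q / real M)"
proof -
  let ?U2 = "unif01 \<Otimes>\<^sub>M unif01"
  let ?U3 = "unif01 \<Otimes>\<^sub>M ?U2"
  let ?U4 = "unif01 \<Otimes>\<^sub>M ?U3"
  have sf: "sigma_finite_measure ?U2" "sigma_finite_measure ?U3" "sigma_finite_measure ?U4"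
    by (intro prob_space_imp_sigma_finite prob_space_pair prob_space_unif01)+
  have U2: "emeasure ?U2 (space ?U2) = 1"
    by (intro prob_space.emeasure_space_1 prob_space_pair prob_space_unif01)
  have N: "emeasure std_normal_distribution (space std_normal_distribution) = 1"
    by (rule prob_space.emeasure_space_1[OF prob_space_std_normal])
  have sets: "{..<q} \<in> sets unif01" "{..<1 / real M} \<in> sets unif01"
    by (simp_all add: unif01_def)
  have M: "0 \<le> 1 / real M" "1 / real M \<le> 1"
    using assms by auto
  have E: "{s \<in> space sample_measure. explores_first q M (snd s)}
      = space std_normal_distribution \<times> ({..<q} \<times> ({..<1 / real M} \<times> space ?U2))"
    unfolding explores_first_def sample_measure_def by (auto simp: space_pair_measure unif01_def)
  show "{s \<in> space sample_measure. explores_first q M (snd s)} \<in> sets sample_measure"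
    using sets unfolding E by (auto simp: sample_measure_def)
  have "emeasure ?U3 ({..<1 / real M} \<times> space ?U2) = ennreal (1 / real M)"
    using sets M U2 by (simp add: sigma_finite_measure.emeasure_pair_measure_Times[OF sf(1)]
        emeasure_unif01_lessThan)
  then have "emeasure ?U4 ({..<q} \<times> ({..<1 / real M} \<times> space ?U2)) = ennreal (q / real M)"
    using sets assms by (simp add: sigma_finite_measure.emeasure_pair_measure_Times[OF sf(2)]
        emeasure_unif01_lessThan ennreal_mult'[symmetric])
  then show "emeasure sample_measure {s \<in> space sample_measure. explores_first q M (snd s)} = ennreal (q / real M)"
    using sets N unfolding E by (simp add: sample_measure_def sigma_finite_measure.emeasure_pair_measure_Times[OF sf(3)])
qed

lemma nn_integral_half_explores_first:
  assumes "0 \<le> q" "q \<le> 1" "M \<ge> 1"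
  shows "(\<integral>\<^sup>+ s. ennreal (if explores_first q M (snd s) then 1/2 else 1) \<partial>sample_measure)
    = ennreal (1 - q / (2 * real M))"
proof -
  have "measure sample_measure {s \<in> space sample_measure. explores_first q M (snd s)} = q / real M"
    using emeasure_explores_first[OF assms] assms by (simp add: Seq.M.emeasure_eq_measure)
  then show ?thesis
    using explores_first_sets[OF assms] by (simp add: Seq.M.nn_integral_half_on_event mult.commute)
qed

text \<open>The stream chosen at time \<open>t + 1\<close>, as a function of the uniforms
  \<open>r = (ug, ua, um, uk)\<close> of the sample drawn at that time.\<close>

definition selected_stream :: "nat \<Rightarrow> real \<Rightarrow> (nat \<Rightarrow> sample) \<Rightarrow> nat \<Rightarrow> real \<times> real \<times> real \<times> real \<Rightarrow> nat" where
  "selected_stream M \<mu> w t r =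
     (let h = hist M \<mu> 0 w t; (_, _, _, um, uk) = w t;
          eps = min 1 (real M / (max 1 (real (Suc t) - real (nuhat M um uk h))) powr (1/3))
      in if fst r < eps then unif_stream M (fst (snd r)) else Mhat M um h)"

lemma hist_Suc_eq:
  "hist M \<mu> 0 w (Suc t) = (let A = selected_stream M \<mu> w t (snd (w (Suc t)))
     in hist M \<mu> 0 w t @ [(A, fst (w (Suc t)) + (if A = 1 then \<mu> else 0))])"
  by (simp add: selected_stream_def Let_def split: prod.split)

declare hist.simps(2)[simp del]

lemma length_hist [simp]: "length (hist M \<mu> 0 w t) = t"
  by (induction t) (simp_all add: hist_Suc_eq Let_def)

lemma nth_hist:
  assumes "i < t"
  shows "hist M \<mu> 0 w t ! i = (let A = selected_stream M \<mu> w i (snd (w (Suc i)))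
     in (A, fst (w (Suc i)) + (if A = 1 then \<mu> else 0)))"
  using assms
proof (induction t)
  case (Suc t)
  then show ?case
    by (cases "i = t") (simp_all add: hist_Suc_eq Let_def nth_append)
qed simp

lemma hist_cong: "(\<And>i. i \<le> t \<Longrightarrow> w i = w' i) \<Longrightarrow> hist M \<mu> 0 w t = hist M \<mu> 0 w' t"
proof (induction t)
  case (Suc t)
  then have "hist M \<mu> 0 w t = hist M \<mu> 0 w' t" "w t = w' t" "w (Suc t) = w' (Suc t)"
    by simp_all
  then have "selected_stream M \<mu> w t = selected_stream M \<mu> w' t"
    by (simp only: selected_stream_def[abs_def])
  then show ?case
    using \<open>w (Suc t) = w' (Suc t)\<close> \<open>hist M \<mu> 0 w t = hist M \<mu> 0 w' t\<close>
    by (simp only: hist_Suc_eq)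
qed simp

lemma selected_stream_cong:
  assumes "\<And>i. i \<le> t \<Longrightarrow> w i = w' i"
  shows "selected_stream M \<mu> w t = selected_stream M \<mu> w' t"
proof -
  have "hist M \<mu> 0 w t = hist M \<mu> 0 w' t" "w t = w' t"
    using assms by (auto intro: hist_cong)
  then show ?thesis
    by (simp only: selected_stream_def[abs_def])
qed

lemma unif_stream_first: "ua < 1 / real M \<Longrightarrow> unif_stream M ua = 1"
proof -
  assume "ua < 1 / real M"
  then have "ua * real M < 1"
    by (cases "M = 0") (simp_all add: field_simps)
  then have "nat \<lfloor>ua * real M\<rfloor> = 0"
    by linarith
  then show ?thesis
    unfolding unif_stream_def by simp
qed

lemma selected_stream_explores_first:
  assumes "Suc i \<le> t" and "q \<le> 1" and "q \<le> real M / real t powr (1/3)"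
    and "explores_first q M r"
  shows "selected_stream M \<mu> w i r = 1"
proof -
  obtain z ug ua um uk where wi: "w i = (z, ug, ua, um, uk)"
    by (cases "w i") auto
  let ?d = "max 1 (real (Suc i) - real (nuhat M um uk (hist M \<mu> 0 w i)))"
  have "?d powr (1/3) \<le> real t powr (1/3)"
    using assms(1) by (intro powr_mono2) auto
  moreover have "0 < real t"
    using assms(1) by simp
  ultimately have "real M / real t powr (1/3) \<le> real M / ?d powr (1/3)"
    by (intro divide_left_mono) auto
  then have "fst r < min 1 (real M / ?d powr (1/3))"
    using assms(2-4) unfolding explores_first_def by linarith
  then have "selected_stream M \<mu> w i r = unif_stream M (fst (snd r))"
    unfolding selected_stream_def Let_def wi prod.case by (rule if_P)
  also have "\<dots> = 1"
    using assms(4) unfolding explores_first_def by (simp add: unif_stream_first)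
  finally show ?thesis .
qed

section \<open>Generalised likelihood ratio statistics\<close>

lemma bij_betw_nth_filter_upt:
  fixes P :: "nat \<Rightarrow> bool" and n :: nat
  defines "I \<equiv> filter P [0..<n]"
  assumes "k < length I"
  shows "bij_betw ((!) I) {k..<length I} {i \<in> {I ! k..<n}. P i}"
proof -
  have sorted: "sorted_wrt (<) I"
    unfolding I_def by (intro sorted_wrt_filter sorted_wrt_upt)
  then have less: "I ! i < I ! j" if "i < j" "j < length I" for i j
    using that sorted_wrt_nth_less by blast
  have mem: "I ! j < n \<and> P (I ! j)" if "j < length I" for j
    using nth_mem[OF that] unfolding I_def by auto
  have "inj_on ((!) I) {k..<length I}"
    by (intro inj_onI) (metis atLeastLessThan_iff less less_irrefl nat_neq_iff)
  moreover have "(!) I ` {k..<length I} = {i \<in> {I ! k..<n}. P i}"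
  proof (intro equalityI subsetI)
    fix i assume "i \<in> (!) I ` {k..<length I}"
    then show "i \<in> {i \<in> {I ! k..<n}. P i}"
      using mem less by (auto simp: le_less)
  next
    fix i assume i: "i \<in> {i \<in> {I ! k..<n}. P i}"
    then have "i \<in> set I"
      unfolding I_def by auto
    then obtain j where j: "j < length I" "I ! j = i"
      by (auto simp: in_set_conv_nth)
    have "k \<le> j"
      using less[of j k] assms(2) i j by (cases "k \<le> j") auto
    then show "i \<in> (!) I ` {k..<length I}"
      using j by auto
  qed
  ultimately show ?thesis
    unfolding bij_betw_def by blast
qed

definition sampling_times :: "(nat \<times> real) list \<Rightarrow> nat \<Rightarrow> nat \<Rightarrow> nat set" where
  "sampling_times h m a = {i \<in> {a..<length h}. fst (h ! i) = m}"

lemma finite_sampling_times [simp]: "finite (sampling_times h m a)"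
  by (simp add: sampling_times_def)

lemma length_obs: "length (obs h m) = card (sampling_times h m 0)"
proof -
  have "length (obs h m) = length (filter (\<lambda>i. fst (h ! i) = m) [0..<length h])"
    by (simp add: obs_def)
  also have "\<dots> = card (sampling_times h m 0)"
    by (subst distinct_card[symmetric]) (auto simp: sampling_times_def)
  finally show ?thesis .
qed

lemma glr_eq_window_sum:
  assumes "k < length (obs h m)"
  obtains a where "a < length h"
    and "card (sampling_times h m a) = length (obs h m) - k"
    and "glr h m k = (\<Sum>i\<in>sampling_times h m a. snd (h ! i))\<^sup>2 / (2 * real (card (sampling_times h m a)))"
proof -
  let ?I = "filter (\<lambda>i. fst (h ! i) = m) [0..<length h]"
  have len: "length (obs h m) = length ?I"
    by (simp add: obs_def)
  then have bij: "bij_betw ((!) ?I) {k..<length ?I} (sampling_times h m (?I ! k))"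
    using bij_betw_nth_filter_upt[of k] assms by (simp add: sampling_times_def)
  have "?I ! k < length h"
    using nth_mem[of k ?I] assms len by auto
  moreover have card: "card (sampling_times h m (?I ! k)) = length (obs h m) - k"
    using bij_betw_same_card[OF bij] len by simp
  moreover have "(\<Sum>j\<in>{k..<length (obs h m)}. map snd (obs h m) ! j)
      = (\<Sum>i\<in>sampling_times h m (?I ! k). snd (h ! i))"
    using len by (simp add: sum.reindex_bij_betw[OF bij, symmetric] obs_def)
  ultimately show ?thesis
    using that[of "?I ! k"] assms by (simp add: glr_def Let_def of_nat_diff)
qed

lemma glr_0: "glr h m 0 = (\<Sum>i\<in>sampling_times h m 0. snd (h ! i))\<^sup>2 / (2 * real (card (sampling_times h m 0)))"
proof (cases "obs h m = []")
  case True
  then have "sampling_times h m 0 = {}"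
    using length_obs[of h m] by simp
  with True show ?thesis
    by (simp add: glr_def)
next
  case False
  obtain a where "card (sampling_times h m a) = card (sampling_times h m 0)"
    and glr: "glr h m 0 = (\<Sum>i\<in>sampling_times h m a. snd (h ! i))\<^sup>2 / (2 * real (card (sampling_times h m a)))"
  proof (rule glr_eq_window_sum[of 0 h m])
    show "0 < length (obs h m)"
      using False by simp
  qed (auto simp: length_obs)
  moreover have "sampling_times h m a \<subseteq> sampling_times h m 0"
    by (auto simp: sampling_times_def)
  ultimately have "sampling_times h m a = sampling_times h m 0"
    by (simp add: card_subset_eq)
  with glr show ?thesis
    by simp
qed

lemma glr_le_Tstat: "k < length (obs h m) \<Longrightarrow> glr h m k \<le> Tstat h m"
  unfolding Tstat_def by auto

lemma Tstat_attained:
  assumes "obs h m \<noteq> []"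
  obtains k where "k < length (obs h m)" and "glr h m k = Tstat h m"
proof -
  have "Tstat h m \<in> glr h m ` {..<length (obs h m)}"
    using assms unfolding Tstat_def by (auto intro!: Max_in)
  with that show ?thesis
    by auto
qed

lemma snd_hist_sampling_time:
  assumes "i \<in> sampling_times (hist M \<mu> 0 w t) m a"
  shows "snd (hist M \<mu> 0 w t ! i) = fst (w (Suc i)) + (if m = 1 then \<mu> else 0)"
  using assms by (auto simp: sampling_times_def nth_hist Let_def)

section \<open>Exponential martingales along the sample path\<close>

definition lr_step :: "nat \<Rightarrow> real \<Rightarrow> nat \<Rightarrow> real \<Rightarrow> (nat \<Rightarrow> sample) \<Rightarrow> nat \<Rightarrow> real" where
  "lr_step M \<mu> m \<theta> w i =
     (if selected_stream M \<mu> w i (snd (w (Suc i))) = m then \<theta> * fst (w (Suc i)) - \<theta>\<^sup>2 / 2 else 0)"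

text \<open>A mean-one martingale whatever the sampling rule: the stream chosen at step \<open>i + 1\<close>
  does not depend on the noise observed at that step.\<close>
definition lr_mart :: "nat \<Rightarrow> real \<Rightarrow> nat \<times> nat \<times> real \<Rightarrow> nat \<Rightarrow> (nat \<Rightarrow> sample) \<Rightarrow> ennreal" where
  "lr_mart M \<mu> j t w = (case j of (m, a, \<theta>) \<Rightarrow> ennreal (exp (\<Sum>i\<in>{a..<t}. lr_step M \<mu> m \<theta> w i)))"

lemma lr_step_cong:
  assumes "\<And>i'. i' \<le> Suc i \<Longrightarrow> w i' = w' i'"
  shows "lr_step M \<mu> m \<theta> w i = lr_step M \<mu> m \<theta> w' i"
  using assms selected_stream_cong[of i w w' M \<mu>] by (simp add: lr_step_def)

lemma prefix_determined_lr_mart: "prefix_determined (Suc t) (lr_mart M \<mu> j t)"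
  unfolding prefix_determined_def lr_mart_def
  by (auto split: prod.split intro!: sum.cong lr_step_cong)

lemma lr_mart_Suc:
  "lr_mart M \<mu> j (Suc t) (w(Suc t := s)) = lr_mart M \<mu> j t w *
     ennreal (exp (if fst (snd j) \<le> t \<and> selected_stream M \<mu> w t (snd s) = fst j
                   then snd (snd j) * fst s - (snd (snd j))\<^sup>2 / 2 else 0))"
proof -
  obtain m a \<theta> where j: "j = (m, a, \<theta>)"
    by (cases j) auto
  have upd: "lr_step M \<mu> m \<theta> (w(Suc t := s)) i = lr_step M \<mu> m \<theta> w i" if "i < t" for i
    using that by (intro lr_step_cong) auto
  have "selected_stream M \<mu> (w(Suc t := s)) t = selected_stream M \<mu> w t"
    by (intro selected_stream_cong) auto
  then have last: "lr_step M \<mu> m \<theta> (w(Suc t := s)) t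
      = (if selected_stream M \<mu> w t (snd s) = m then \<theta> * fst s - \<theta>\<^sup>2 / 2 else 0)"
    by (simp add: lr_step_def)
  show ?thesis
  proof (cases "a \<le> t")
    case True
    then have "{a..<Suc t} = insert t {a..<t}"
      by auto
    with True show ?thesis
      by (simp add: j lr_mart_def upd last exp_add ennreal_mult)
  qed (simp add: j lr_mart_def)
qed

lemma iter_nn_integral_lr_mart_le:
  assumes "finite J"
  shows "iter_nn_integral sample_measure (Suc t) (\<lambda>w. \<Sum>j\<in>J. c j * lr_mart M \<mu> j t w) \<le> (\<Sum>j\<in>J. c j)"
proof (induction t arbitrary: c)
  case 0
  show ?case
    by (simp add: lr_mart_def Seq.M.iter_nn_integral_const del: iter_nn_integral.simps)
next
  case (Suc t)
  have step: "(\<integral>\<^sup>+ s. (\<Sum>j\<in>J. c j * lr_mart M \<mu> j (Suc t) (w(Suc t := s))) \<partial>sample_measure)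
      \<le> (\<Sum>j\<in>J. c j * lr_mart M \<mu> j t w)" for w
    unfolding lr_mart_Suc mult.assoc[symmetric] sample_measure_def
    by (rule nn_integral_std_normal_tilt_sum_le[OF prob_space_unif01_pow4 assms])
  have "iter_nn_integral sample_measure (Suc (Suc t)) (\<lambda>w. \<Sum>j\<in>J. c j * lr_mart M \<mu> j (Suc t) w)
      \<le> iter_nn_integral sample_measure (Suc t) (\<lambda>w. \<Sum>j\<in>J. c j * lr_mart M \<mu> j t w)"
    unfolding iter_nn_integral.simps(2)[of _ "Suc t"] by (intro iter_nn_integral_mono step)
  also have "\<dots> \<le> (\<Sum>j\<in>J. c j)"
    by (rule Suc.IH)
  finally show ?case .
qed

lemma sum_lr_step:
  "(\<Sum>i\<in>{a..<t}. lr_step M \<mu> m \<theta> w i)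
    = \<theta> * (\<Sum>i\<in>sampling_times (hist M \<mu> 0 w t) m a. fst (w (Suc i)))
      - \<theta>\<^sup>2 / 2 * real (card (sampling_times (hist M \<mu> 0 w t) m a))"
proof -
  have "(\<Sum>i\<in>{a..<t}. lr_step M \<mu> m \<theta> w i)
      = (\<Sum>i\<in>sampling_times (hist M \<mu> 0 w t) m a. \<theta> * fst (w (Suc i)) - \<theta>\<^sup>2 / 2)"
    unfolding sampling_times_def lr_step_def
    by (subst sum.inter_filter[symmetric]) (auto simp: nth_hist Let_def intro!: sum.cong)
  then show ?thesis
    by (simp add: sum_subtractf sum_distrib_left)
qed

section \<open>Forced exploration of stream 1\<close>

definition explore_count :: "real \<Rightarrow> nat \<Rightarrow> nat \<Rightarrow> (nat \<Rightarrow> sample) \<Rightarrow> nat" where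
  "explore_count q M t w = card {i. i < t \<and> explores_first q M (snd (w (Suc i)))}"

lemma explore_count_Suc:
  "explore_count q M (Suc t) (w(Suc t := s)) = explore_count q M t w + (if explores_first q M (snd s) then 1 else 0)"
proof -
  have "{i. i < Suc t \<and> explores_first q M (snd ((w(Suc t := s)) (Suc i)))}
      = {i. i < t \<and> explores_first q M (snd (w (Suc i)))} \<union> (if explores_first q M (snd s) then {t} else {})"
    by (auto simp: less_Suc_eq)
  then show ?thesis
    by (simp add: explore_count_def)
qed

lemma prefix_determined_explore_count: "prefix_determined (Suc t) (explore_count q M t)"
  unfolding prefix_determined_def
proof (intro allI impI)
  fix w w' :: "nat \<Rightarrow> sample"
  assume "\<forall>i<Suc t. w i = w' i"
  then have "{i. i < t \<and> explores_first q M (snd (w (Suc i)))}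
      = {i. i < t \<and> explores_first q M (snd (w' (Suc i)))}"
    by auto
  then show "explore_count q M t w = explore_count q M t w'"
    by (simp add: explore_count_def)
qed

lemma pred_explores_first:
  assumes "0 \<le> q" "q \<le> 1" "M \<ge> 1"
  shows "Measurable.pred sample_measure (\<lambda>s. explores_first q M (snd s))"
  using explores_first_sets[OF assms] by (simp add: pred_def)

lemma borel_measurable_explore_count:
  assumes "0 \<le> q" "q \<le> 1" "M \<ge> 1"
  shows "(\<lambda>w. real (explore_count q M t w)) \<in> borel_measurable FOCuS_space"
proof -
  have pred: "Measurable.pred FOCuS_space (\<lambda>w. explores_first q M (snd (w (Suc i))))" for i
    using pred_explores_first[OF assms] unfolding FOCuS_space_def by measurable
  have "real (explore_count q M t w) = (\<Sum>i<t. if explores_first q M (snd (w (Suc i))) then 1 else 0)" for w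
    by (simp add: explore_count_def sum.If_cases Int_def)
  then show ?thesis
    using pred by simp
qed

lemma iter_nn_integral_explore_count_le:
  assumes "0 \<le> q" "q \<le> 1" "M \<ge> 1"
  shows "iter_nn_integral sample_measure (Suc t) (\<lambda>w. c * ennreal ((1/2) ^ explore_count q M t w))
    \<le> c * ennreal ((1 - q / (2 * real M)) ^ t)"
proof (induction t arbitrary: c)
  case 0
  show ?case
    by (simp add: explore_count_def Seq.M.iter_nn_integral_const del: iter_nn_integral.simps)
next
  case (Suc t)
  let ?r = "1 - q / (2 * real M)"
  have r: "0 \<le> ?r"
    using assms by (simp add: field_simps)
  have meas: "(\<lambda>s. ennreal (if explores_first q M (snd s) then 1/2 else 1)) \<in> borel_measurable sample_measure"
    using pred_explores_first[OF assms] by measurable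
  have step: "(\<integral>\<^sup>+ s. c * ennreal ((1/2) ^ explore_count q M (Suc t) (w(Suc t := s))) \<partial>sample_measure)
      = (c * ennreal ?r) * ennreal ((1/2) ^ explore_count q M t w)" for w
  proof -
    have "(\<integral>\<^sup>+ s. c * ennreal ((1/2) ^ explore_count q M (Suc t) (w(Suc t := s))) \<partial>sample_measure)
        = (\<integral>\<^sup>+ s. (c * ennreal ((1/2) ^ explore_count q M t w))
            * ennreal (if explores_first q M (snd s) then 1/2 else 1) \<partial>sample_measure)"
      by (rule nn_integral_cong) (simp add: explore_count_Suc ennreal_mult'[symmetric] mult.assoc)
    also have "\<dots> = (c * ennreal ((1/2) ^ explore_count q M t w)) * ennreal ?r"
      using meas by (simp add: nn_integral_cmult nn_integral_half_explores_first[OF assms])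
    finally show ?thesis
      by (simp add: mult_ac)
  qed
  have "iter_nn_integral sample_measure (Suc (Suc t)) (\<lambda>w. c * ennreal ((1/2) ^ explore_count q M (Suc t) w))
      = iter_nn_integral sample_measure (Suc t) (\<lambda>w. (c * ennreal ?r) * ennreal ((1/2) ^ explore_count q M t w))"
    by (simp only: iter_nn_integral.simps(2)[of _ "Suc t"] step)
  also have "\<dots> \<le> (c * ennreal ?r) * ennreal (?r ^ t)"
    by (rule Suc.IH)
  also have "\<dots> = c * ennreal (?r ^ Suc t)"
    using r by (simp add: ennreal_mult'[symmetric] mult_ac)
  finally show ?case .
qed

lemma explore_count_le_card_sampling_times:
  assumes "q \<le> 1" and "q \<le> real M / real t powr (1/3)"
  shows "explore_count q M t w \<le> card (sampling_times (hist M \<mu> 0 w t) 1 0)"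
  unfolding explore_count_def
proof (rule card_mono)
  show "{i. i < t \<and> explores_first q M (snd (w (Suc i)))} \<subseteq> sampling_times (hist M \<mu> 0 w t) 1 0"
  proof
    fix i assume i: "i \<in> {i. i < t \<and> explores_first q M (snd (w (Suc i)))}"
    then have "selected_stream M \<mu> w i (snd (w (Suc i))) = 1"
      using assms by (intro selected_stream_explores_first) auto
    with i show "i \<in> sampling_times (hist M \<mu> 0 w t) 1 0"
      by (simp add: sampling_times_def nth_hist Let_def)
  qed
qed simp

section \<open>Switching away from the changed stream\<close>

lemma exists_tilt_sqrt:
  fixes x L S :: real
  assumes "0 < x" "0 < L" "2 * x * L \<le> S\<^sup>2"
  shows "\<exists>\<theta>\<in>{sqrt (2 * x / L), - sqrt (2 * x / L)}. x \<le> \<theta> * S - \<theta>\<^sup>2 / 2 * L"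
proof -
  let ?r = "sqrt (2 * x / L)"
  have "sqrt (2 * x * L) \<le> \<bar>S\<bar>"
    using real_sqrt_le_mono[OF assms(3)] by simp
  then have "?r * sqrt (2 * x * L) \<le> ?r * \<bar>S\<bar>"
    using assms(1,2) by (intro mult_left_mono) simp_all
  moreover have "?r * sqrt (2 * x * L) = sqrt ((2 * x)\<^sup>2)"
    using assms(1,2) by (simp add: real_sqrt_mult[symmetric] power2_eq_square)
  moreover have "sqrt ((2 * x)\<^sup>2) = 2 * x"
    using assms(1) by (simp only: real_sqrt_abs)
  moreover have "?r\<^sup>2 / 2 * L = x"
    using assms(1,2) by simp
  ultimately have "x \<le> ?r * \<bar>S\<bar> - ?r\<^sup>2 / 2 * L"
    by linarith
  then show ?thesis
    by (cases "0 \<le> S") auto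
qed

lemma exists_tilt_half:
  fixes \<mu> N S :: real
  assumes "\<bar>\<mu>\<bar> * N / 2 \<le> \<bar>S\<bar>"
  shows "\<exists>\<theta>\<in>{\<bar>\<mu>\<bar> / 2, - \<bar>\<mu>\<bar> / 2}. \<mu>\<^sup>2 * N / 8 \<le> \<theta> * S - \<theta>\<^sup>2 / 2 * N"
proof -
  have "\<bar>\<mu>\<bar> / 2 * (\<bar>\<mu>\<bar> * N / 2) \<le> \<bar>\<mu>\<bar> / 2 * \<bar>S\<bar>"
    using assms by (intro mult_left_mono) auto
  then have "\<mu>\<^sup>2 * N / 8 \<le> \<bar>\<mu>\<bar> / 2 * \<bar>S\<bar> - (\<bar>\<mu>\<bar> / 2)\<^sup>2 / 2 * N"
    by (simp add: power2_eq_square field_simps)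
  then show ?thesis
    by (cases "0 \<le> S") auto
qed

definition tilt_grid :: "nat \<Rightarrow> real \<Rightarrow> real \<Rightarrow> nat \<Rightarrow> (nat \<times> nat \<times> real) set" where
  "tilt_grid M \<mu> x t = {1..M} \<times> {..<t} \<times>
     ({\<bar>\<mu>\<bar> / 2, - \<bar>\<mu>\<bar> / 2} \<union> (\<lambda>l. sqrt (2 * x / real l)) ` {1..t} \<union> (\<lambda>l. - sqrt (2 * x / real l)) ` {1..t})"

lemma finite_tilt_grid: "finite (tilt_grid M \<mu> x t)"
  by (simp add: tilt_grid_def)

lemma card_tilt_grid_le: "card (tilt_grid M \<mu> x t) \<le> M * t * (2 + 2 * t)"
proof -
  let ?\<Theta> = "{\<bar>\<mu>\<bar> / 2, - \<bar>\<mu>\<bar> / 2} \<union> (\<lambda>l. sqrt (2 * x / real l)) ` {1..t} \<union> (\<lambda>l. - sqrt (2 * x / real l)) ` {1..t}"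
  have "card ?\<Theta> \<le> card {\<bar>\<mu>\<bar> / 2, - \<bar>\<mu>\<bar> / 2} + card ((\<lambda>l. sqrt (2 * x / real l)) ` {1..t})
      + card ((\<lambda>l. - sqrt (2 * x / real l)) ` {1..t})"
    by (intro order_trans[OF card_Un_le] add_right_mono card_Un_le)
  also have "\<dots> \<le> 2 + t + t"
    by (intro add_mono card_image_le[THEN order_trans]) (auto simp: card_insert_if)
  finally have "M * t * card ?\<Theta> \<le> M * t * (2 + 2 * t)"
    by (intro mult_le_mono2) simp
  then show ?thesis
    by (simp add: tilt_grid_def card_cartesian_product mult.assoc)
qed

lemma exists_tilt_grid_lr_ge_of_glr_ge:
  assumes m: "m \<in> {2..M}" and x: "0 < x"
    and k: "k < length (obs (hist M \<mu> 0 w t) m)" and glr: "x \<le> glr (hist M \<mu> 0 w t) m k"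
  shows "\<exists>j\<in>tilt_grid M \<mu> x t. x \<le> (\<Sum>i\<in>{fst (snd j)..<t}. lr_step M \<mu> (fst j) (snd (snd j)) w i)"
proof -
  let ?h = "hist M \<mu> 0 w t"
  obtain a where a: "a < t" and card: "card (sampling_times ?h m a) = length (obs ?h m) - k"
    and glr_eq: "glr ?h m k = (\<Sum>i\<in>sampling_times ?h m a. snd (?h ! i))\<^sup>2
                               / (2 * real (card (sampling_times ?h m a)))"
    using glr_eq_window_sum[OF k] by auto
  define L where "L = card (sampling_times ?h m a)"
  define S where "S = (\<Sum>i\<in>sampling_times ?h m a. fst (w (Suc i)))"
  have L: "1 \<le> L"
    using card k by (simp add: L_def)
  have "L \<le> card {a..<t}"
    unfolding L_def by (rule card_mono) (auto simp: sampling_times_def)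
  then have "L \<le> t"
    by simp
  have "glr ?h m k = S\<^sup>2 / (2 * real L)"
    using m by (simp add: glr_eq S_def L_def snd_hist_sampling_time)
  moreover have "x * (2 * real L) \<le> glr ?h m k * (2 * real L)"
    using glr by (intro mult_right_mono) auto
  ultimately have "2 * x * real L \<le> S\<^sup>2"
    using L by simp
  moreover have "0 < real L"
    using L by simp
  ultimately obtain \<theta> where \<theta>: "\<theta> \<in> {sqrt (2 * x / real L), - sqrt (2 * x / real L)}"
    and bound: "x \<le> \<theta> * S - \<theta>\<^sup>2 / 2 * real L"
    using exists_tilt_sqrt[OF x] by blast
  have "(m, a, \<theta>) \<in> tilt_grid M \<mu> x t"
    using m a \<theta> L \<open>L \<le> t\<close> by (auto simp: tilt_grid_def)
  with bound show ?thesis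
    by (intro bexI[of _ "(m, a, \<theta>)"]) (simp_all add: sum_lr_step S_def L_def)
qed

lemma exists_tilt_grid_lr_ge_of_switch:
  fixes M t :: nat and \<mu> :: real and w :: "nat \<Rightarrow> sample"
  defines "h \<equiv> hist M \<mu> 0 w t"
  assumes M: "1 < M" and x: "0 < x"
    and x_le: "x \<le> \<mu>\<^sup>2 * real (card (sampling_times h 1 0)) / 8"
    and switch: "Tstat h 1 \<le> Max (Tstat h ` {2..M})"
  shows "\<exists>j\<in>tilt_grid M \<mu> x t. x \<le> (\<Sum>i\<in>{fst (snd j)..<t}. lr_step M \<mu> (fst j) (snd (snd j)) w i)"
proof -
  define N where "N = card (sampling_times h 1 0)"
  define S where "S = (\<Sum>i\<in>sampling_times h 1 0. fst (w (Suc i)))"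
  have N: "0 < N"
  proof (rule ccontr)
    assume "\<not> 0 < N"
    with x x_le show False
      by (simp add: N_def)
  qed
  then have "0 < t"
    by (auto simp: N_def sampling_times_def h_def card_gt_0_iff)
  consider (noise) "\<bar>\<mu>\<bar> * real N / 2 \<le> \<bar>S\<bar>" | (signal) "\<bar>S\<bar> < \<bar>\<mu>\<bar> * real N / 2"
    by linarith
  then show ?thesis
  proof cases
    case noise
    then obtain \<theta> where \<theta>: "\<theta> \<in> {\<bar>\<mu>\<bar> / 2, - \<bar>\<mu>\<bar> / 2}"
      and bound: "\<mu>\<^sup>2 * real N / 8 \<le> \<theta> * S - \<theta>\<^sup>2 / 2 * real N"
      using exists_tilt_half by blast
    have "(1, 0, \<theta>) \<in> tilt_grid M \<mu> x t"
      using M \<theta> \<open>0 < t\<close> by (auto simp: tilt_grid_def)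
    with bound x_le show ?thesis
      by (intro bexI[of _ "(1, 0, \<theta>)"]) (simp_all add: sum_lr_step S_def N_def h_def)
  next
    case signal
    have "\<bar>\<mu> * real N\<bar> \<le> \<bar>S + \<mu> * real N\<bar> + \<bar>S\<bar>"
      using abs_triangle_ineq[of "S + \<mu> * real N" "- S"] by simp
    then have "\<bar>\<mu>\<bar> * real N / 2 \<le> \<bar>S + \<mu> * real N\<bar>"
      using signal by (simp add: abs_mult)
    from power_mono[OF this, of 2]
    have "(\<bar>\<mu>\<bar> * real N / 2)\<^sup>2 \<le> (S + \<mu> * real N)\<^sup>2"
      by simp
    then have "\<mu>\<^sup>2 * real N / 8 \<le> (S + \<mu> * real N)\<^sup>2 / (2 * real N)"
      using N by (simp add: power2_eq_square field_simps)
    moreover have "glr h 1 0 = (S + \<mu> * real N)\<^sup>2 / (2 * real N)"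
      by (simp add: glr_0 h_def snd_hist_sampling_time sum.distrib S_def N_def mult.commute)
    moreover have "glr h 1 0 \<le> Tstat h 1"
      using N by (intro glr_le_Tstat) (simp add: length_obs N_def)
    ultimately have "x \<le> Max (Tstat h ` {2..M})"
      using x_le switch by (simp add: N_def)
    moreover have "Max (Tstat h ` {2..M}) \<in> Tstat h ` {2..M}"
      using M by (intro Max_in) auto
    ultimately obtain m where m: "m \<in> {2..M}" and x_m: "x \<le> Tstat h m"
      by auto
    then have "obs h m \<noteq> []"
      using x by (auto simp: Tstat_def)
    then obtain k where k: "k < length (obs h m)" and "glr h m k = Tstat h m"
      by (rule Tstat_attained)
    with x_m have "x \<le> glr h m k"
      by simp
    with m x k show ?thesis
      unfolding h_def by (rule exists_tilt_grid_lr_ge_of_glr_ge)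
  qed
qed

lemma measure_few_explorations:
  assumes "0 \<le> q" "q \<le> 1" "M \<ge> 1"
  shows "measure FOCuS_space {w \<in> space FOCuS_space. real (explore_count q M t w) < l}
    \<le> 2 powr l * (1 - q / (2 * real M)) ^ t"
  unfolding FOCuS_space_def
proof (rule Seq.measure_le_of_iter_nn_integral)
  let ?g = "\<lambda>w. ennreal (2 powr l) * ennreal ((1/2) ^ explore_count q M t w)"
  show "1 \<le> ?g w" if "w \<in> {w \<in> space Seq.S. real (explore_count q M t w) < l}" for w
  proof -
    have "(2::real) ^ explore_count q M t w = 2 powr real (explore_count q M t w)"
      by (simp add: powr_realpow)
    also have "\<dots> \<le> 2 powr l"
      using that by (intro powr_mono) auto
    finally have "1 \<le> 2 powr l * (1/2) ^ explore_count q M t w"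
      by (simp add: power_one_over field_simps)
    then show ?thesis
      by (simp add: ennreal_mult[symmetric] ennreal_leI)
  qed
  show "prefix_determined (Suc t) ?g"
    by (rule prefix_determined_comp[OF prefix_determined_explore_count])
  have "0 \<le> 1 - q / (2 * real M)"
    using assms by (simp add: field_simps)
  then show "iter_nn_integral sample_measure (Suc t) ?g \<le> ennreal (2 powr l * (1 - q / (2 * real M)) ^ t)"
    using iter_nn_integral_explore_count_le[OF assms] by (simp add: ennreal_mult)
  show "0 \<le> 2 powr l * (1 - q / (2 * real M)) ^ t"
    using \<open>0 \<le> 1 - q / (2 * real M)\<close> by simp
qed

lemma one_le_sum_lr_mart_of_switch:
  assumes M: "1 < M" and \<mu>: "\<mu> \<noteq> 0" and l: "0 < l"
    and q: "q \<le> 1" "q \<le> real M / real t powr (1/3)"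
    and switch: "Tstat (hist M \<mu> 0 w t) 1 \<le> Max (Tstat (hist M \<mu> 0 w t) ` {2..M})"
    and many: "l \<le> real (explore_count q M t w)"
  shows "1 \<le> (\<Sum>j\<in>tilt_grid M \<mu> (\<mu>\<^sup>2 * l / 8) t. ennreal (exp (- (\<mu>\<^sup>2 * l / 8))) * lr_mart M \<mu> j t w)"
proof -
  let ?x = "\<mu>\<^sup>2 * l / 8"
  have x: "0 < ?x"
    using \<mu> l by simp
  have "real (explore_count q M t w) \<le> real (card (sampling_times (hist M \<mu> 0 w t) 1 0))"
    using explore_count_le_card_sampling_times[OF q] by simp
  with many have "l \<le> real (card (sampling_times (hist M \<mu> 0 w t) 1 0))"
    by linarith
  then have "?x \<le> \<mu>\<^sup>2 * real (card (sampling_times (hist M \<mu> 0 w t) 1 0)) / 8"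
    by (intro divide_right_mono mult_left_mono) auto
  then obtain j where j: "j \<in> tilt_grid M \<mu> ?x t"
    and "?x \<le> (\<Sum>i\<in>{fst (snd j)..<t}. lr_step M \<mu> (fst j) (snd (snd j)) w i)"
    using exists_tilt_grid_lr_ge_of_switch[OF M x _ switch] by blast
  then have "1 \<le> ennreal (exp (- ?x)) * lr_mart M \<mu> j t w"
    by (auto simp: lr_mart_def ennreal_mult[symmetric] exp_add[symmetric] split: prod.split)
  also have "\<dots> \<le> (\<Sum>j\<in>tilt_grid M \<mu> ?x t. ennreal (exp (- ?x)) * lr_mart M \<mu> j t w)"
    using j finite_tilt_grid by (intro member_le_sum) auto
  finally show ?thesis .
qed

lemma measure_switch_many_explorations:
  assumes M: "1 < M" and \<mu>: "\<mu> \<noteq> 0" and l: "0 < l"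
    and q: "q \<le> 1" "q \<le> real M / real t powr (1/3)"
  shows "measure FOCuS_space {w \<in> space FOCuS_space.
      Tstat (hist M \<mu> 0 w t) 1 \<le> Max (Tstat (hist M \<mu> 0 w t) ` {2..M})
      \<and> l \<le> real (explore_count q M t w)}
    \<le> real (M * t * (2 + 2 * t)) * exp (- (\<mu>\<^sup>2 * l / 8))"
  unfolding FOCuS_space_def
proof (rule Seq.measure_le_of_iter_nn_integral)
  let ?x = "\<mu>\<^sup>2 * l / 8"
  let ?J = "tilt_grid M \<mu> ?x t"
  let ?g = "\<lambda>w. \<Sum>j\<in>?J. ennreal (exp (- ?x)) * lr_mart M \<mu> j t w"
  show "1 \<le> ?g w"
    if "w \<in> {w \<in> space Seq.S. Tstat (hist M \<mu> 0 w t) 1 \<le> Max (Tstat (hist M \<mu> 0 w t) ` {2..M})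
      \<and> l \<le> real (explore_count q M t w)}" for w
    using that by (intro one_le_sum_lr_mart_of_switch[OF M \<mu> l q]) simp_all
  show "prefix_determined (Suc t) ?g"
    by (intro prefix_determined_sum) (rule prefix_determined_comp[OF prefix_determined_lr_mart])
  have "iter_nn_integral sample_measure (Suc t) ?g \<le> (\<Sum>j\<in>?J. ennreal (exp (- ?x)))"
    by (rule iter_nn_integral_lr_mart_le[OF finite_tilt_grid])
  also have "\<dots> = ennreal (real (card ?J) * exp (- ?x))"
    by (simp add: ennreal_mult ennreal_of_nat_eq_real_of_nat)
  also have "\<dots> \<le> ennreal (real (M * t * (2 + 2 * t)) * exp (- ?x))"
    using card_tilt_grid_le[of M \<mu> ?x t]
    by (intro ennreal_leI mult_right_mono) (simp_all only: of_nat_le_iff exp_ge_zero)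
  finally show "iter_nn_integral sample_measure (Suc t) ?g \<le> \<dots>" .
qed simp

lemma measure_switch_le:
  assumes M: "1 < M" and \<mu>: "\<mu> \<noteq> 0" and l: "0 < l"
    and q: "0 \<le> q" "q \<le> 1" "q \<le> real M / real t powr (1/3)"
  shows "measure FOCuS_space {w \<in> space FOCuS_space.
      Tstat (hist M \<mu> 0 w t) 1 \<le> Max (Tstat (hist M \<mu> 0 w t) ` {2..M})}
    \<le> 2 powr l * (1 - q / (2 * real M)) ^ t + real (M * t * (2 + 2 * t)) * exp (- (\<mu>\<^sup>2 * l / 8))"
    (is "measure _ ?H \<le> _")
proof -
  let ?few = "{w \<in> space FOCuS_space. real (explore_count q M t w) < l}"
  let ?many = "{w \<in> space FOCuS_space.
      Tstat (hist M \<mu> 0 w t) 1 \<le> Max (Tstat (hist M \<mu> 0 w t) ` {2..M})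
      \<and> l \<le> real (explore_count q M t w)}"
  have "(\<lambda>w. real (explore_count q M t w)) \<in> borel_measurable FOCuS_space"
    using M by (intro borel_measurable_explore_count q(1,2)) simp
  from measurable_sets[OF this, of "{..<l}"]
  have few: "?few \<in> sets FOCuS_space"
    by (simp add: vimage_def Int_def conj_commute)
  have "measure FOCuS_space ?H \<le> measure FOCuS_space ?many + measure FOCuS_space ?few"
  proof (cases "?H \<in> sets FOCuS_space")
    case True
    moreover have "?many = ?H - ?few"
      by auto
    ultimately have many: "?many \<in> sets FOCuS_space"
      using few by simp
    then have "measure FOCuS_space ?H \<le> measure FOCuS_space (?many \<union> ?few)"
      using few unfolding FOCuS_space_def by (intro Seq.finite_measure_mono) auto
    also have "\<dots> \<le> measure FOCuS_space ?many + measure FOCuS_space ?few"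
      using many few by (rule measure_Un_le)
    finally show ?thesis .
  qed (simp add: measure_notin_sets)
  also have "\<dots> \<le> real (M * t * (2 + 2 * t)) * exp (- (\<mu>\<^sup>2 * l / 8)) + 2 powr l * (1 - q / (2 * real M)) ^ t"
    using measure_switch_many_explorations[OF M \<mu> l q(2,3)] measure_few_explorations[OF q(1,2)] M
    by (intro add_mono) simp_all
  finally show ?thesis
    by simp
qed

lemma measure_switch_bigo:
  fixes M :: nat and \<mu> :: real
  assumes "M > 1" and "\<mu> \<noteq> 0"
  shows "(\<lambda>t. measure FOCuS_space {w \<in> space FOCuS_space.
      Tstat (hist M \<mu> 0 w t) 1 \<le> Max (Tstat (hist M \<mu> 0 w t) ` {2..M})}) \<in> O(\<lambda>t. inverse (real t ^ 2))"
    (is "?H \<in> _")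
proof -
  define q :: "nat \<Rightarrow> real" where "q t = real M / real t powr (1/3)" for t
  define l :: "nat \<Rightarrow> real" where "l t = real t * q t / (4 * real M)" for t
  define B :: "nat \<Rightarrow> real" where
    "B t = 2 powr l t * (1 - q t / (2 * real M)) ^ t
      + real M * real t * (2 + 2 * real t) * exp (- (\<mu>\<^sup>2 * l t / 8))" for t
  have M: "1 < real M" and \<mu>: "0 < \<mu>\<^sup>2"
    using assms(1,2) by simp_all
  have "eventually (\<lambda>t. real M \<le> real t powr (1/3)) at_top"
    using M by real_asymp
  with eventually_gt_at_top[of 0] have "eventually (\<lambda>t. norm (?H t) \<le> norm (B t)) at_top"
  proof eventually_elim
    case (elim t)
    then have q: "0 \<le> q t" "q t \<le> 1" "q t \<le> real M / real t powr (1/3)" and l: "0 < l t"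
      using M by (simp_all add: q_def l_def)
    from measure_switch_le[OF assms(1,2) l q] have "?H t \<le> B t"
      by (simp add: B_def algebra_simps)
    then show ?case
      by simp
  qed
  then have "?H \<in> O(B)"
    by (rule landau_o.big_mono)
  also have "B \<in> O(\<lambda>t. inverse (real t ^ 2))"
    unfolding B_def
  proof (rule sum_in_bigo)
    show "(\<lambda>t. 2 powr l t * (1 - q t / (2 * real M)) ^ t) \<in> O(\<lambda>t. inverse (real t ^ 2))"
      unfolding q_def l_def using M by real_asymp
    show "(\<lambda>t. real M * real t * (2 + 2 * real t) * exp (- (\<mu>\<^sup>2 * l t / 8)))
      \<in> O(\<lambda>t. inverse (real t ^ 2))"
      unfolding q_def l_def using M \<mu> by real_asymp
  qed
  finally show ?thesis .
qed

theorem proposition1: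
  fixes M :: nat and \<mu> lam :: real
  assumes "M > 1" and "lam > 0" and "\<mu> \<noteq> 0"
  shows "summable (\<lambda>t. measure FOCuS_space
           {\<omega> \<in> space FOCuS_space.
              Max (Tstat (hist M \<mu> 0 \<omega> t) ` {2..M}) \<ge> Tstat (hist M \<mu> 0 \<omega> t) 1})"
proof -
  \<comment> \<open>\<open>lam\<close> is irrelevant: the sampling rule does not depend on the threshold.\<close>
  have "summable (\<lambda>t. norm (inverse (real t ^ 2) :: real))"
    using inverse_power_summable[of 2] by simp
  with measure_switch_bigo[OF assms(1,3)] show ?thesis
    by (rule summable_comparison_test_bigo[rotated])
qed

end
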